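(* For every finite set $U$ in a commutative group $G$, \[ \alpha(U)\le\beta(U),\quad \alpha'(U)\le4\beta'(U),\quad \alpha''(U)\le3\beta''(U), \] \[ \beta(U)\le\alpha(U)^2,\quad \beta''(U)\le\alpha(U)^3, \] \[ \alpha''(U)\le\alpha(U)^2,\quad \beta''(U)\le\beta''(2U)\le\beta(U)^2, \] where $2U=U+U$.
   Context: With $A,B$ ranging over nonempty finite subsets of $G$: $\alpha(U)=\inf_{A\supset U,B\supset U}\frac{|A+B|}{\sqrt{|A||B|}}$; $\alpha'(U)=\inf_{A\supset U,B\supset U,|A|=|B|}\frac{|A+B|}{|A|}$; $\alpha''(U)=\inf_{A\supset U}\frac{|A+A|}{|A|}$; $\beta(U)=\inf_{A,B}\frac{|A+B+U|}{\sqrt{|A||B|}}$; $\beta'(U)=\inf_{A,B,|A|=|B|}\frac{|A+B+U|}{\sqrt{|A||B|}}$; $\beta''(U)=\inf_A\frac{|A+A+U|}{|A|}$. *)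

theory Defs
  imports Complex_Main "HOL-Library.Set_Algebras"
begin

definition alpha :: "'a::ab_group_add set \<Rightarrow> real" where
  "alpha U = Inf {real (card (A + B)) / sqrt (real (card A) * real (card B)) | A B.
     finite A \<and> finite B \<and> A \<noteq> {} \<and> B \<noteq> {} \<and> U \<subseteq> A \<and> U \<subseteq> B}"

definition alpha' :: "'a::ab_group_add set \<Rightarrow> real" where
  "alpha' U = Inf {real (card (A + B)) / real (card A) | A B.
     finite A \<and> finite B \<and> A \<noteq> {} \<and> B \<noteq> {} \<and> U \<subseteq> A \<and> U \<subseteq> B \<and> card A = card B}"

definition alpha'' :: "'a::ab_group_add set \<Rightarrow> real" where
  "alpha'' U = Inf {real (card (A + A)) / real (card A) | A.
     finite A \<and> A \<noteq> {} \<and> U \<subseteq> A}"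

definition beta :: "'a::ab_group_add set \<Rightarrow> real" where
  "beta U = Inf {real (card (A + B + U)) / sqrt (real (card A) * real (card B)) | A B.
     finite A \<and> finite B \<and> A \<noteq> {} \<and> B \<noteq> {}}"

definition beta' :: "'a::ab_group_add set \<Rightarrow> real" where
  "beta' U = Inf {real (card (A + B + U)) / sqrt (real (card A) * real (card B)) | A B.
     finite A \<and> finite B \<and> A \<noteq> {} \<and> B \<noteq> {} \<and> card A = card B}"

definition beta'' :: "'a::ab_group_add set \<Rightarrow> real" where
  "beta'' U = Inf {real (card (A + A + U)) / real (card A) | A.
     finite A \<and> A \<noteq> {}}"

end

theory Submission
  imports Defs
begin

text \<open>
  Everything rests on Petridis' form of the Pluennecke--Ruzsa inequality: if a nonempty
  \<open>X \<subseteq> A\<close> minimises \<open>|X + C| / |X|\<close>, then \<open>|X + C + D| |X| \<le> |X + C| |X + D|\<close> for every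
  finite \<open>D\<close>, hence \<open>|X + nC| \<le> (|A + C| / |A|)^n |X|\<close>.

  To bound \<open>alpha\<close> by \<open>beta\<close>, take such minimisers \<open>X \<subseteq> A\<close> for \<open>C = B + U\<close> and
  \<open>Y \<subseteq> B\<close> for \<open>C = X + U\<close>. Translates of \<open>X + U\<close> and \<open>Y + U\<close> contain \<open>U\<close>, and the
  inequality with \<open>D = U\<close> bounds their sumset, a translate of \<open>X + Y + 2U\<close>, in terms of
  \<open>|A + B + U|\<close>. In the equal-size variants one trims the larger set to the size of the
  smaller one (or uses a single minimiser \<open>Z \<subseteq> A\<close> for \<open>C = A + U\<close>), which even gives
  \<open>alpha' \<le> beta'\<close> and \<open>alpha'' \<le> beta''\<close>.

  To bound \<open>beta\<close>, \<open>beta''\<close> and \<open>alpha''\<close> by powers of \<open>alpha\<close>, compare \<open>A + X + U\<close>,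
  \<open>A + A + U\<close> and \<open>A + A\<close> with \<open>X + 2A\<close> or \<open>X + 3A\<close> for a minimiser \<open>X \<subseteq> B\<close> with
  \<open>C = A\<close>, where \<open>|A| \<le> |B|\<close>; likewise \<open>B + B + 2U\<close> with \<open>Z + 2(B + U)\<close> for
  \<open>beta''(2U) \<le> beta(U)^2\<close>.
\<close>

lemma card_le_card_sumset:
  fixes A B :: "'a::ab_group_add set"
  assumes "finite A" "finite B" "A \<noteq> {}"
  shows "card B \<le> card (B + A)"
proof -
  obtain a where "a \<in> A" using assms(3) by blast
  have "card B = card (B + {a})" by (simp add: card_plus_sing)
  also have "\<dots> \<le> card (B + A)"
    using assms \<open>a \<in> A\<close> by (intro card_mono finite_set_plus set_plus_mono2) auto
  finally show ?thesis .
qed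

lemma card_sumset_mono:
  fixes A B C D :: "'a::ab_group_add set"
  assumes "A \<subseteq> C" "B \<subseteq> D" "finite C" "finite D"
  shows "card (A + B) \<le> card (C + D)"
  using assms by (intro card_mono finite_set_plus set_plus_mono2)

lemma card_sumset_translates:
  fixes A B :: "'a::ab_group_add set"
  shows "card ((A + {s}) + (B + {t})) = card (A + B)"
proof -
  have "(A + {s}) + (B + {t}) = A + B + ({s} + {t})" by (simp add: ac_simps)
  also have "{s} + {t} = {s + t}" by (auto simp: set_plus_def)
  finally show ?thesis by (simp add: card_plus_sing)
qed

lemma subset_sumset_translate:
  fixes X U :: "'a::ab_group_add set"
  assumes "x \<in> X"
  shows "U \<subseteq> X + U + {- x}"
proof
  fix u assume "u \<in> U"
  then have "x + u + - x \<in> X + U + {- x}" using assms by (intro set_plus_intro) auto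
  then show "u \<in> X + U + {- x}" by simp
qed

lemma obtain_intermediate_subset:
  assumes "finite W" "U \<subseteq> W" "card U \<le> k" "k \<le> card W"
  obtains V where "U \<subseteq> V" "V \<subseteq> W" "card V = k"
proof -
  have "finite U" using assms(1,2) finite_subset by blast
  have "k - card U \<le> card (W - U)" using assms \<open>finite U\<close> by (simp add: card_Diff_subset)
  then obtain T where "T \<subseteq> W - U" "card T = k - card U"
    by (rule obtain_subset_with_card_n)
  moreover have "finite T" using \<open>T \<subseteq> W - U\<close> assms(1) finite_subset by blast
  ultimately have "card (U \<union> T) = k"
    using \<open>finite U\<close> assms(3) by (subst card_Un_disjoint) auto
  then show ?thesis using that \<open>T \<subseteq> W - U\<close> assms(2) by blast
qed

lemma card_sumset_insert_le:
  fixes X C D Z :: "'a::ab_group_add set"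
  assumes "finite X" "finite C" "finite D" "Z \<subseteq> X"
    and "\<And>z c. z \<in> Z \<Longrightarrow> c \<in> C \<Longrightarrow> d + (z + c) \<in> X + C + D"
  shows "card (X + C + insert d D) + card (Z + C) \<le> card (X + C + D) + card (X + C)"
proof -
  have fin: "finite (X + C)" "finite (X + C + D)"
    using assms by (simp_all add: finite_set_plus)
  have ZC: "Z + C \<subseteq> X + C" using assms(4) by (intro set_plus_mono2) auto
  have "X + C + insert d D = (X + C + D) \<union> (+) d ` (X + C)"
    by (simp add: set_plus_insert)
  also have "\<dots> \<subseteq> (X + C + D) \<union> (+) d ` (X + C - (Z + C))"
    using assms(5) by (auto elim!: set_plus_elim)
  finally have "card (X + C + insert d D) \<le> card (X + C + D) + card ((+) d ` (X + C - (Z + C)))"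
    using fin by (meson card_Un_le card_mono finite_UnI finite_imageI finite_Diff order_trans)
  moreover have "card ((+) d ` (X + C - (Z + C))) + card (Z + C) = card (X + C)"
    using fin ZC by (simp add: card_image card_Diff_subset card_mono finite_subset)
  ultimately show ?thesis by linarith
qed

lemma card_sumset_insert_ge:
  fixes X D Z :: "'a::ab_group_add set"
  assumes "finite X" "finite D" "Z \<subseteq> X"
    and "\<And>x. x \<in> X \<Longrightarrow> d + x \<in> X + D \<Longrightarrow> x \<in> Z"
  shows "card (X + D) + card X \<le> card (X + insert d D) + card Z"
proof -
  have fin: "finite (X + D)" using assms by (simp add: finite_set_plus)
  have "(X + D) \<union> (+) d ` (X - Z) \<subseteq> X + insert d D"
    by (auto simp: set_plus_insert)
  moreover have "(X + D) \<inter> (+) d ` (X - Z) = {}" using assms(4) by auto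
  ultimately have "card (X + D) + card ((+) d ` (X - Z)) \<le> card (X + insert d D)"
    using fin assms(1,2) by (metis card_Un_disjoint card_mono finite_Diff finite_imageI
        finite_set_plus finite_insert)
  moreover have "card ((+) d ` (X - Z)) + card Z = card X"
    using assms(1,3) by (simp add: card_image card_Diff_subset card_mono finite_subset)
  ultimately show ?thesis by linarith
qed

lemma petridis:
  fixes X C D :: "'a::ab_group_add set"
  assumes "finite X" "finite C" "finite D"
    and minimal: "\<And>Z. Z \<subseteq> X \<Longrightarrow> card (X + C) * card Z \<le> card (Z + C) * card X"
  shows "card (X + C + D) * card X \<le> card (X + C) * card (X + D)"
  using \<open>finite D\<close>
proof (induction D rule: finite_induct)
  case empty
  then show ?case by simp
next
  case (insert d D)
  txt \<open>Adding \<open>d\<close> to \<open>D\<close> enlarges \<open>X + C + D\<close> by at most \<open>|X + C| - |Z + C|\<close> and \<open>X + D\<close> by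
    at least \<open>|X| - |Z|\<close>; minimality of \<open>X\<close> gives \<open>|Z + C| \<ge> |Z| |X + C| / |X|\<close>.\<close>
  define Z where "Z = {z \<in> X. \<forall>c \<in> C. d + (z + c) \<in> X + C + D}"
  have "Z \<subseteq> X" by (auto simp: Z_def)
  have "x \<in> Z" if "x \<in> X" "d + x \<in> X + D" for x
  proof -
    obtain y e where "d + x = y + e" "y \<in> X" "e \<in> D"
      using \<open>d + x \<in> X + D\<close> by (auto elim: set_plus_elim)
    have "d + (x + c) \<in> X + C + D" if "c \<in> C" for c
    proof -
      have "y + c + e \<in> X + C + D" using \<open>y \<in> X\<close> \<open>c \<in> C\<close> \<open>e \<in> D\<close> by blast
      also have "y + c + e = d + (x + c)" using \<open>d + x = y + e\<close> by (simp add: algebra_simps)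
      finally show ?thesis .
    qed
    then show ?thesis using \<open>x \<in> X\<close> by (simp add: Z_def)
  qed
  then have lower: "card (X + D) + card X \<le> card (X + insert d D) + card Z"
    using \<open>Z \<subseteq> X\<close> assms(1) insert(1) by (intro card_sumset_insert_ge)
  have upper: "card (X + C + insert d D) + card (Z + C) \<le> card (X + C + D) + card (X + C)"
    using \<open>Z \<subseteq> X\<close> assms(1,2) insert(1) by (intro card_sumset_insert_le) (auto simp: Z_def)
  have "(card (X + C + insert d D) + card (Z + C)) * card X \<le> (card (X + C + D) + card (X + C)) * card X"
    using upper by (rule mult_right_mono) simp
  moreover have "card (X + C) * (card (X + D) + card X) \<le> card (X + C) * (card (X + insert d D) + card Z)"
    using lower by (rule mult_left_mono) simp
  ultimately show ?case
    using insert.IH minimal[OF \<open>Z \<subseteq> X\<close>] by (simp add: algebra_simps)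
qed

lemma petridis_subset:
  fixes A C :: "'a::ab_group_add set"
  assumes "finite A" "A \<noteq> {}" "finite C"
  obtains X where "X \<subseteq> A" "X \<noteq> {}" "card (X + C) * card A \<le> card (A + C) * card X"
    "\<And>D. finite D \<Longrightarrow> card (X + C + D) * card X \<le> card (X + C) * card (X + D)"
proof -
  define ratio where "ratio Z = real (card (Z + C)) / real (card Z)" for Z
  have "finite {Z. Z \<subseteq> A \<and> Z \<noteq> {}}" using assms(1) by simp
  moreover have "A \<in> {Z. Z \<subseteq> A \<and> Z \<noteq> {}}" using assms(2) by simp
  ultimately obtain X where X: "is_arg_min ratio (\<lambda>Z. Z \<in> {Z. Z \<subseteq> A \<and> Z \<noteq> {}}) X"
    using ex_is_arg_min_if_finite by blast
  then have "X \<subseteq> A" "X \<noteq> {}" by (simp_all add: is_arg_min_def)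
  then have "finite X" "card X > 0" using assms(1) finite_subset card_gt_0_iff by blast+
  have cross: "card (X + C) * card Z \<le> card (Z + C) * card X" if "Z \<subseteq> A" for Z
  proof (cases "Z = {}")
    case False
    then have "card Z > 0" using that assms(1) finite_subset card_gt_0_iff by blast
    moreover have "ratio X \<le> ratio Z" using X that False by (simp add: is_arg_min_linorder)
    ultimately have "real (card (X + C)) * real (card Z) \<le> real (card (Z + C)) * real (card X)"
      using \<open>card X > 0\<close> by (simp add: ratio_def divide_simps)
    then show ?thesis by (simp flip: of_nat_mult)
  qed simp
  show ?thesis
  proof
    show "card (X + C + D) * card X \<le> card (X + C) * card (X + D)" if "finite D" for D
      using \<open>finite X\<close> assms(3) that cross \<open>X \<subseteq> A\<close> by (intro petridis) auto
  qed (use \<open>X \<subseteq> A\<close> \<open>X \<noteq> {}\<close> cross in auto)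
qed

primrec nfold_sumset :: "nat \<Rightarrow> 'a::comm_monoid_add set \<Rightarrow> 'a set" where
  "nfold_sumset 0 C = {0}"
| "nfold_sumset (Suc n) C = C + nfold_sumset n C"

lemma finite_nfold_sumset: "finite C \<Longrightarrow> finite (nfold_sumset n C)"
  by (induction n) (simp_all add: finite_set_plus)

lemma nfold_sumset_2: "nfold_sumset 2 C = C + C"
  and nfold_sumset_3: "nfold_sumset 3 C = C + (C + C)"
  by (simp_all add: numeral_eq_Suc)

lemma plunnecke_subset:
  fixes A C :: "'a::ab_group_add set"
  assumes "finite A" "A \<noteq> {}" "finite C"
  obtains X where "X \<subseteq> A" "X \<noteq> {}"
    "\<And>n. real (card (X + nfold_sumset n C)) * real (card A) ^ n
       \<le> real (card (A + C)) ^ n * real (card X)"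
proof -
  obtain X where X: "X \<subseteq> A" "X \<noteq> {}" "card (X + C) * card A \<le> card (A + C) * card X"
    "\<And>D. finite D \<Longrightarrow> card (X + C + D) * card X \<le> card (X + C) * card (X + D)"
    using petridis_subset[OF assms] by blast
  have "card X > 0" using X(1,2) assms(1) finite_subset card_gt_0_iff by blast
  have "real (card (X + nfold_sumset n C)) * real (card A) ^ n
      \<le> real (card (A + C)) ^ n * real (card X)" for n
  proof (induction n)
    case (Suc n)
    let ?a = "real (card A)" and ?x = "real (card X)" and ?K = "real (card (A + C))"
    let ?m = "real (card (X + C))" and ?p = "real (card (X + nfold_sumset n C))"
    let ?s = "real (card (X + nfold_sumset (Suc n) C))"
    have "?s * ?x \<le> ?m * ?p"
      using X(4)[OF finite_nfold_sumset[OF assms(3)]] by (simp add: add.assoc flip: of_nat_mult)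
    then have "?s * ?x * ?a ^ Suc n \<le> (?m * ?p) * ?a ^ Suc n"
      by (rule mult_right_mono) simp
    also have "\<dots> = (?m * ?a) * (?p * ?a ^ n)" by (simp add: ac_simps)
    also have "\<dots> \<le> (?K * ?x) * (?K ^ n * ?x)"
    proof (rule mult_mono[OF _ Suc.IH])
      show "?m * ?a \<le> ?K * ?x" using X(3) by (simp flip: of_nat_mult)
    qed simp_all
    also have "\<dots> = ?K ^ Suc n * ?x * ?x" by (simp add: ac_simps)
    finally have "?s * ?a ^ Suc n * ?x \<le> ?K ^ Suc n * ?x * ?x" by (simp add: ac_simps)
    then show ?case using \<open>card X > 0\<close> by simp
  qed simp
  with X(1,2) show ?thesis using that by blast
qed

lemma mult_le_mult_chain:
  fixes s x m p a S :: nat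
  assumes "s * x \<le> m * p" "m * a \<le> S * x" "0 < x"
  shows "s * a \<le> S * p"
proof -
  have "(s * a) * x = (s * x) * a" by simp
  also have "\<dots> \<le> (m * p) * a" using assms(1) by simp
  also have "\<dots> = (m * a) * p" by simp
  also have "\<dots> \<le> (S * x) * p" using assms(2) by simp
  also have "\<dots> = (S * p) * x" by simp
  finally show ?thesis using assms(3) by simp
qed

lemma real_divide_le_divide_of_nat:
  fixes a b c d :: nat
  assumes "a * d \<le> c * b" "0 < b" "0 < d"
  shows "real a / real b \<le> real c / real d"
  using assms by (simp add: divide_simps flip: of_nat_mult)

lemma sqrt_mult_square: "0 \<le> s \<Longrightarrow> sqrt ((s * a) * (s * b)) = s * sqrt (a * b)"
proof -
  assume "0 \<le> s"
  have "(s * a) * (s * b) = s\<^sup>2 * (a * b)" by (simp add: power2_eq_square)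
  then show ?thesis using \<open>0 \<le> s\<close> by (simp add: real_sqrt_mult)
qed

lemma divide_sqrt_prod_le:
  fixes s S a b p q :: real
  assumes "0 \<le> s" "0 < a" "0 < b" "0 < p" "0 < q" "s * a \<le> S * p" "s * b \<le> S * q"
  shows "s / sqrt (p * q) \<le> S / sqrt (a * b)"
proof -
  have "0 \<le> S * p" using assms(1,2,6) by (meson mult_nonneg_nonneg less_imp_le order_trans)
  then have "0 \<le> S" using assms(4) by (simp add: zero_le_mult_iff)
  have "(s * a) * (s * b) \<le> (S * p) * (S * q)"
    by (rule mult_mono) (use assms \<open>0 \<le> S * p\<close> in auto)
  then have "s * sqrt (a * b) \<le> S * sqrt (p * q)"
    using real_sqrt_le_mono assms(1) \<open>0 \<le> S\<close> by (metis sqrt_mult_square)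
  then show ?thesis
    using assms(2-5) by (simp add: divide_le_eq le_divide_eq ac_simps)
qed

lemma square_div_sqrt: "0 < a \<Longrightarrow> 0 < b \<Longrightarrow> (s / sqrt (a * b))\<^sup>2 = s\<^sup>2 / (a * b)"
  by (simp add: power_divide)

lemma divide_le_square_ratio:
  fixes a b x c w s :: real
  assumes "0 < a" "0 < b" "x \<le> b" "c \<le> w" "w * b\<^sup>2 \<le> s\<^sup>2 * x"
  shows "c / a \<le> (s / sqrt (a * b))\<^sup>2"
proof -
  have "(w * b) * b \<le> s\<^sup>2 * b"
    using assms(5) mult_left_mono[OF assms(3), of "s\<^sup>2"] by (simp add: power2_eq_square ac_simps)
  then have "c * b \<le> s\<^sup>2"
    using assms(2,4) by (meson mult_le_cancel_right_pos mult_right_mono less_imp_le order_trans)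
  then show ?thesis using assms(1,2) by (simp add: square_div_sqrt divide_le_eq le_divide_eq ac_simps)
qed

lemma divide_sqrt_le_square_ratio:
  fixes a b x w s :: real
  assumes "0 < a" "a \<le> b" "0 < x" "x \<le> b" "0 \<le> w" "w * b\<^sup>2 \<le> s\<^sup>2 * x"
  shows "w / sqrt (a * x) \<le> (s / sqrt (a * b))\<^sup>2"
proof -
  have "sqrt (a * x) \<le> sqrt (b * b)"
    using assms by (intro real_sqrt_le_mono mult_mono) auto
  then have r: "sqrt (a * x) \<le> b" using assms by simp
  have "(w * a * b) * b \<le> (s\<^sup>2 * x) * a"
    using mult_right_mono[OF assms(6), of a] assms(1) by (simp add: power2_eq_square ac_simps)
  also have "\<dots> = s\<^sup>2 * sqrt (a * x) * sqrt (a * x)"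
    using assms(1,3) by (simp add: ac_simps)
  also have "\<dots> \<le> (s\<^sup>2 * sqrt (a * x)) * b"
    using r assms(1,3) by (intro mult_left_mono) auto
  finally have "w * a * b \<le> s\<^sup>2 * sqrt (a * x)"
    using assms(1,2) by simp
  then show ?thesis
    using assms(1,2,3) by (simp add: square_div_sqrt divide_le_eq le_divide_eq ac_simps)
qed

lemma divide_le_cube_ratio:
  fixes a b x v s :: real
  assumes "0 < a" "a \<le> b" "x \<le> b" "0 \<le> v" "0 \<le> s" "v * b ^ 3 \<le> s ^ 3 * x"
  shows "v / a \<le> (s / sqrt (a * b)) ^ 3"
proof -
  have "sqrt (a * b) \<le> sqrt (b * b)"
    using assms by (intro real_sqrt_le_mono mult_right_mono) auto
  then have r: "sqrt (a * b) \<le> b" using assms by simp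
  have "(v * b\<^sup>2) * b \<le> s ^ 3 * b"
    using assms(6) mult_left_mono[OF assms(3), of "s ^ 3"] assms(5)
    by (simp add: power2_eq_square power3_eq_cube ac_simps)
  then have vb: "v * b\<^sup>2 \<le> s ^ 3" using assms(1,2) by simp
  have "v * (a * b * sqrt (a * b)) \<le> v * (a * b * b)"
    using r assms by (intro mult_left_mono) auto
  also have "\<dots> = a * (v * b\<^sup>2)" by (simp add: power2_eq_square ac_simps)
  also have "\<dots> \<le> a * s ^ 3"
    using vb assms(1) by (intro mult_left_mono) auto
  finally have "v * (a * b * sqrt (a * b)) \<le> s ^ 3 * a" by (simp add: ac_simps)
  moreover have "sqrt (a * b) ^ 3 = a * b * sqrt (a * b)"
    using assms(1,2) by (simp add: power3_eq_cube)
  ultimately show ?thesis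
    using assms(1,2) by (simp add: power_divide divide_le_eq le_divide_eq ac_simps)
qed

lemma cInf_lower_nonneg:
  fixes S :: "real set"
  assumes "x \<in> S" "\<And>y. y \<in> S \<Longrightarrow> 0 \<le> y"
  shows "Inf S \<le> x"
  using assms bdd_belowI[of S 0] by (simp add: cInf_lower)

lemma le_cInf_power:
  fixes S :: "real set"
  assumes "S \<noteq> {}" "\<And>x. x \<in> S \<Longrightarrow> 0 \<le> x" "0 \<le> z" "0 < n" "\<And>x. x \<in> S \<Longrightarrow> z \<le> x ^ n"
  shows "z \<le> Inf S ^ n"
proof -
  have "root n z \<le> Inf S"
  proof (rule cInf_greatest[OF assms(1)])
    fix x assume "x \<in> S"
    then have "root n z \<le> root n (x ^ n)" using assms(4,5) by simp
    also have "\<dots> = x" using \<open>x \<in> S\<close> assms(2,4) by (simp add: real_root_power_cancel)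
    finally show "root n z \<le> x" .
  qed
  then have "root n z ^ n \<le> Inf S ^ n"
    by (rule power_mono) (auto intro: real_root_ge_zero assms(3))
  then show ?thesis using assms(3,4) by simp
qed

lemma alpha_le:
  assumes "finite A" "finite B" "A \<noteq> {}" "B \<noteq> {}" "U \<subseteq> A" "U \<subseteq> B"
  shows "alpha U \<le> real (card (A + B)) / sqrt (real (card A) * real (card B))"
  unfolding alpha_def by (rule cInf_lower_nonneg) (use assms in \<open>blast, auto\<close>)

lemma le_alpha_power:
  assumes "finite U" "U \<noteq> {}" "0 \<le> z" "0 < n"
    and "\<And>A B. finite A \<Longrightarrow> finite B \<Longrightarrow> A \<noteq> {} \<Longrightarrow> B \<noteq> {} \<Longrightarrow> U \<subseteq> A \<Longrightarrow> U \<subseteq> B \<Longrightarrow>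
      z \<le> (real (card (A + B)) / sqrt (real (card A) * real (card B))) ^ n"
  shows "z \<le> alpha U ^ n"
  unfolding alpha_def by (rule le_cInf_power) (use assms in \<open>blast, auto\<close>)

lemma alpha'_le:
  assumes "finite A" "finite B" "A \<noteq> {}" "B \<noteq> {}" "U \<subseteq> A" "U \<subseteq> B" "card A = card B"
  shows "alpha' U \<le> real (card (A + B)) / real (card A)"
  unfolding alpha'_def by (rule cInf_lower_nonneg) (use assms in \<open>blast, auto\<close>)

lemma alpha''_le:
  assumes "finite A" "A \<noteq> {}" "U \<subseteq> A"
  shows "alpha'' U \<le> real (card (A + A)) / real (card A)"
  unfolding alpha''_def by (rule cInf_lower_nonneg) (use assms in \<open>blast, auto\<close>)

lemma alpha''_nonneg: "finite U \<Longrightarrow> U \<noteq> {} \<Longrightarrow> 0 \<le> alpha'' U"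
  unfolding alpha''_def by (rule cInf_greatest) auto

lemma beta_le:
  assumes "finite A" "finite B" "A \<noteq> {}" "B \<noteq> {}"
  shows "beta U \<le> real (card (A + B + U)) / sqrt (real (card A) * real (card B))"
  unfolding beta_def by (rule cInf_lower_nonneg) (use assms in \<open>blast, auto\<close>)

lemma le_beta:
  assumes "\<And>A B. finite A \<Longrightarrow> finite B \<Longrightarrow> A \<noteq> {} \<Longrightarrow> B \<noteq> {} \<Longrightarrow>
      c \<le> real (card (A + B + U)) / sqrt (real (card A) * real (card B))"
  shows "c \<le> beta U"
  unfolding beta_def using assms by (intro cInf_greatest) auto

lemma beta_nonneg: "0 \<le> beta U"
  by (rule le_beta) simp

lemma le_beta_power:
  assumes "0 \<le> z" "0 < n"
    and "\<And>A B. finite A \<Longrightarrow> finite B \<Longrightarrow> A \<noteq> {} \<Longrightarrow> B \<noteq> {} \<Longrightarrow>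
      z \<le> (real (card (A + B + U)) / sqrt (real (card A) * real (card B))) ^ n"
  shows "z \<le> beta U ^ n"
  unfolding beta_def by (rule le_cInf_power) (use assms in \<open>blast, auto\<close>)

lemma le_beta':
  assumes "\<And>A B. finite A \<Longrightarrow> finite B \<Longrightarrow> A \<noteq> {} \<Longrightarrow> B \<noteq> {} \<Longrightarrow> card A = card B \<Longrightarrow>
      c \<le> real (card (A + B + U)) / sqrt (real (card A) * real (card B))"
  shows "c \<le> beta' U"
  unfolding beta'_def by (rule cInf_greatest) (auto intro!: assms simp del: real_sqrt_mult_self)

lemma beta'_nonneg: "0 \<le> beta' U"
  by (rule le_beta') simp

lemma beta''_le:
  assumes "finite A" "A \<noteq> {}"
  shows "beta'' U \<le> real (card (A + A + U)) / real (card A)"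
  unfolding beta''_def by (rule cInf_lower_nonneg) (use assms in \<open>blast, auto\<close>)

lemma le_beta'':
  assumes "\<And>A. finite A \<Longrightarrow> A \<noteq> {} \<Longrightarrow> c \<le> real (card (A + A + U)) / real (card A)"
  shows "c \<le> beta'' U"
  unfolding beta''_def using assms by (intro cInf_greatest) auto

lemma beta''_nonneg: "0 \<le> beta'' U"
  by (rule le_beta'') simp

lemma obtain_petridis_pair:
  fixes U A B :: "'a::ab_group_add set"
  assumes "finite U" "finite A" "finite B" "A \<noteq> {}" "B \<noteq> {}"
  obtains X Y where "X \<subseteq> A" "Y \<subseteq> B" "X \<noteq> {}" "Y \<noteq> {}"
    "card (X + Y + U + U) * card A \<le> card (A + B + U) * card (X + U)"
    "card (X + Y + U + U) * card B \<le> card (A + B + U) * card (Y + U)"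
proof -
  obtain X where X: "X \<subseteq> A" "X \<noteq> {}" "card (X + (B + U)) * card A \<le> card (A + (B + U)) * card X"
    "\<And>D. finite D \<Longrightarrow> card (X + (B + U) + D) * card X \<le> card (X + (B + U)) * card (X + D)"
    using petridis_subset[of A "B + U"] assms by (auto simp: finite_set_plus)
  have "finite X" "card X > 0"
    using X(1,2) assms(2) finite_subset card_gt_0_iff by blast+
  obtain Y where Y: "Y \<subseteq> B" "Y \<noteq> {}" "card (Y + (X + U)) * card B \<le> card (B + (X + U)) * card Y"
    "\<And>D. finite D \<Longrightarrow> card (Y + (X + U) + D) * card Y \<le> card (Y + (X + U)) * card (Y + D)"
    using petridis_subset[of B "X + U"] assms \<open>finite X\<close> by (auto simp: finite_set_plus)
  have "card Y > 0"
    using Y(1,2) assms(3) finite_subset card_gt_0_iff by blast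
  have "card (X + Y + U + U) * card A \<le> card (A + B + U) * card (X + U)"
  proof -
    have "X + Y + U + U \<subseteq> X + (B + U) + U"
      using Y(1) by (simp only: add.assoc) (intro set_plus_mono2 order_refl)
    then have "card (X + Y + U + U) \<le> card (X + (B + U) + U)"
      using \<open>finite X\<close> assms by (intro card_mono finite_set_plus)
    then have "card (X + Y + U + U) * card X \<le> card (X + (B + U)) * card (X + U)"
      using X(4)[OF assms(1)] by (meson le_trans mult_le_mono1)
    then have "card (X + Y + U + U) * card A \<le> card (A + (B + U)) * card (X + U)"
      using X(3) \<open>card X > 0\<close> by (rule mult_le_mult_chain)
    then show ?thesis by (simp add: add.assoc)
  qed
  moreover have "card (X + Y + U + U) * card B \<le> card (A + B + U) * card (Y + U)"
  proof -
    have "card (X + Y + U + U) * card Y \<le> card (Y + (X + U)) * card (Y + U)"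
      using Y(4)[OF assms(1)] by (simp add: ac_simps)
    moreover have "card (Y + (X + U)) * card B \<le> card (A + B + U) * card Y"
    proof -
      have "B + (X + U) = X + B + U" by (simp add: ac_simps)
      also have "\<dots> \<subseteq> A + B + U" using X(1) by (intro set_plus_mono2 order_refl)
      finally have "card (B + (X + U)) \<le> card (A + B + U)"
        using assms by (intro card_mono finite_set_plus)
      then show ?thesis using Y(3) by (meson le_trans mult_le_mono1)
    qed
    ultimately show ?thesis
      using \<open>card Y > 0\<close> by (rule mult_le_mult_chain)
  qed
  ultimately show ?thesis using that X(1,2) Y(1,2) by blast
qed

lemma obtain_small_sumset_supersets:
  fixes U A B :: "'a::ab_group_add set"
  assumes "finite U" "finite A" "finite B" "A \<noteq> {}" "B \<noteq> {}"
  obtains X' Y' where "finite X'" "finite Y'" "U \<subseteq> X'" "U \<subseteq> Y'"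
    "card (X' + Y') * card A \<le> card (A + B + U) * card X'"
    "card (X' + Y') * card B \<le> card (A + B + U) * card Y'"
proof -
  obtain X Y where XY: "X \<subseteq> A" "Y \<subseteq> B" "X \<noteq> {}" "Y \<noteq> {}"
    "card (X + Y + U + U) * card A \<le> card (A + B + U) * card (X + U)"
    "card (X + Y + U + U) * card B \<le> card (A + B + U) * card (Y + U)"
    using obtain_petridis_pair[OF assms] by blast
  obtain x y where "x \<in> X" "y \<in> Y" using XY(3,4) by blast
  define X' where "X' = X + U + {- x}"
  define Y' where "Y' = Y + U + {- y}"
  have card_X'Y': "card (X' + Y') = card (X + Y + U + U)"
    using card_sumset_translates[of "X + U" "- x" "Y + U" "- y"] by (simp add: X'_def Y'_def ac_simps)
  have "finite X" "finite Y" using XY(1,2) assms(2,3) finite_subset by blast+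
  show ?thesis
  proof (rule that)
    show "finite X'" "finite Y'"
      using \<open>finite X\<close> \<open>finite Y\<close> assms(1) by (simp_all add: X'_def Y'_def finite_set_plus)
    show "U \<subseteq> X'" "U \<subseteq> Y'"
      unfolding X'_def Y'_def
      by (rule subset_sumset_translate[OF \<open>x \<in> X\<close>] subset_sumset_translate[OF \<open>y \<in> Y\<close>])+
    show "card (X' + Y') * card A \<le> card (A + B + U) * card X'"
      using XY(5) card_X'Y' by (simp add: X'_def card_plus_sing)
    show "card (X' + Y') * card B \<le> card (A + B + U) * card Y'"
      using XY(6) card_X'Y' by (simp add: Y'_def card_plus_sing)
  qed
qed

lemma alpha_le_beta:
  fixes U :: "'a::ab_group_add set"
  assumes "finite U" "U \<noteq> {}"
  shows "alpha U \<le> beta U"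
proof (rule le_beta)
  fix A B :: "'a set"
  assume AB: "finite A" "finite B" "A \<noteq> {}" "B \<noteq> {}"
  obtain X Y where XY: "finite X" "finite Y" "U \<subseteq> X" "U \<subseteq> Y"
    "card (X + Y) * card A \<le> card (A + B + U) * card X"
    "card (X + Y) * card B \<le> card (A + B + U) * card Y"
    using obtain_small_sumset_supersets[OF assms(1) AB] by blast
  have "X \<noteq> {}" "Y \<noteq> {}" using XY(3,4) assms(2) by auto
  have "alpha U \<le> real (card (X + Y)) / sqrt (real (card X) * real (card Y))"
    using XY(1,2) \<open>X \<noteq> {}\<close> \<open>Y \<noteq> {}\<close> XY(3,4) by (rule alpha_le)
  also have "\<dots> \<le> real (card (A + B + U)) / sqrt (real (card A) * real (card B))"
    using XY AB \<open>X \<noteq> {}\<close> \<open>Y \<noteq> {}\<close>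
    by (intro divide_sqrt_prod_le) (simp_all add: card_gt_0_iff flip: of_nat_mult)
  finally show "alpha U \<le> real (card (A + B + U)) / sqrt (real (card A) * real (card B))" .
qed

lemma alpha'_le_of_card_le:
  fixes U X Y :: "'a::ab_group_add set"
  assumes "finite X" "finite Y" "U \<subseteq> X" "U \<subseteq> Y" "U \<noteq> {}" "card X \<le> card Y"
  shows "alpha' U \<le> real (card (X + Y)) / real (card X)"
proof -
  have "card U \<le> card X" using assms(1,3) by (rule card_mono)
  then obtain V where V: "U \<subseteq> V" "V \<subseteq> Y" "card V = card X"
    using obtain_intermediate_subset[OF assms(2,4) _ assms(6)] by blast
  have "finite V" using V(2) assms(2) finite_subset by blast
  have "alpha' U \<le> real (card (X + V)) / real (card X)"
    using assms(1,3,5) \<open>finite V\<close> V by (intro alpha'_le) auto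
  also have "\<dots> \<le> real (card (X + Y)) / real (card X)"
    using V(2) assms(1,2) by (intro divide_right_mono of_nat_mono card_mono finite_set_plus set_plus_mono2) auto
  finally show ?thesis .
qed

lemma alpha'_le_beta':
  fixes U :: "'a::ab_group_add set"
  assumes "finite U" "U \<noteq> {}"
  shows "alpha' U \<le> beta' U"
proof (rule le_beta')
  fix A B :: "'a set"
  assume AB: "finite A" "finite B" "A \<noteq> {}" "B \<noteq> {}" "card A = card B"
  obtain X Y where XY: "finite X" "finite Y" "U \<subseteq> X" "U \<subseteq> Y"
    "card (X + Y) * card A \<le> card (A + B + U) * card X"
    "card (X + Y) * card B \<le> card (A + B + U) * card Y"
    using obtain_small_sumset_supersets[OF assms(1) AB(1-4)] by blast
  have pos: "0 < card A" "0 < card X" "0 < card Y"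
    using XY(1-4) AB(1,3) assms(2) by (auto simp: card_gt_0_iff)
  have "alpha' U \<le> real (card (A + B + U)) / real (card A)"
  proof (cases "card X \<le> card Y")
    case True
    then have "alpha' U \<le> real (card (X + Y)) / real (card X)"
      using XY(1-4) assms(2) by (intro alpha'_le_of_card_le)
    also have "\<dots> \<le> real (card (A + B + U)) / real (card A)"
      using XY(5) pos by (intro real_divide_le_divide_of_nat)
    finally show ?thesis .
  next
    case False
    then have "alpha' U \<le> real (card (Y + X)) / real (card Y)"
      using XY(1-4) assms(2) by (intro alpha'_le_of_card_le) auto
    also have "\<dots> \<le> real (card (A + B + U)) / real (card A)"
      using XY(6) AB(5) pos by (intro real_divide_le_divide_of_nat) (simp_all add: add.commute)
    finally show ?thesis .
  qed
  then show "alpha' U \<le> real (card (A + B + U)) / sqrt (real (card A) * real (card B))"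
    using AB(5) by simp
qed

lemma alpha''_le_beta'':
  fixes U :: "'a::ab_group_add set"
  assumes "finite U" "U \<noteq> {}"
  shows "alpha'' U \<le> beta'' U"
proof (rule le_beta'')
  fix A :: "'a set"
  assume "finite A" "A \<noteq> {}"
  obtain Z where Z: "Z \<subseteq> A" "Z \<noteq> {}" "card (Z + (A + U)) * card A \<le> card (A + (A + U)) * card Z"
    "\<And>D. finite D \<Longrightarrow> card (Z + (A + U) + D) * card Z \<le> card (Z + (A + U)) * card (Z + D)"
    using petridis_subset[of A "A + U"] assms \<open>finite A\<close> \<open>A \<noteq> {}\<close> by (auto simp: finite_set_plus)
  have "finite Z" "card Z > 0"
    using Z(1,2) \<open>finite A\<close> finite_subset card_gt_0_iff by blast+
  have "card (Z + U) > 0"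
    using card_le_card_sumset[of U Z] \<open>finite Z\<close> \<open>card Z > 0\<close> assms by linarith
  obtain z where "z \<in> Z" using Z(2) by blast
  define X where "X = Z + U + {- z}"
  have "finite X" using \<open>finite Z\<close> assms(1) by (simp add: X_def finite_set_plus)
  have card_X: "card X = card (Z + U)" by (simp add: X_def card_plus_sing)
  have "card (X + X) = card (Z + Z + U + U)"
    using card_sumset_translates[of "Z + U" "- z" "Z + U" "- z"] by (simp add: X_def ac_simps)
  also have "\<dots> \<le> card (Z + (A + U) + U)"
  proof -
    have "Z + Z + U + U \<subseteq> Z + (A + U) + U"
      using Z(1) by (simp only: add.assoc) (intro set_plus_mono2 order_refl)
    then show ?thesis using \<open>finite A\<close> \<open>finite Z\<close> assms(1) by (intro card_mono finite_set_plus)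
  qed
  finally have "card (X + X) * card Z \<le> card (Z + (A + U) + U) * card Z" by simp
  also have "\<dots> \<le> card (Z + (A + U)) * card X"
    using Z(4)[OF assms(1)] card_X by simp
  finally have "card (X + X) * card A \<le> card (A + (A + U)) * card X"
    using Z(3) \<open>card Z > 0\<close> by (rule mult_le_mult_chain)
  have "alpha'' U \<le> real (card (X + X)) / real (card X)"
    using \<open>finite X\<close> subset_sumset_translate[OF \<open>z \<in> Z\<close>] assms(2) by (intro alpha''_le) (auto simp: X_def)
  also have "\<dots> \<le> real (card (A + (A + U))) / real (card A)"
    using \<open>card (X + X) * card A \<le> _\<close> \<open>finite A\<close> \<open>A \<noteq> {}\<close> \<open>card (Z + U) > 0\<close>
    by (intro real_divide_le_divide_of_nat) (simp_all add: card_X card_gt_0_iff)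
  finally show "alpha'' U \<le> real (card (A + A + U)) / real (card A)"
    by (simp add: add.assoc)
qed

lemma beta''_le_beta''_double:
  fixes U :: "'a::ab_group_add set"
  assumes "finite U" "U \<noteq> {}"
  shows "beta'' U \<le> beta'' (U + U)"
proof (rule le_beta'')
  fix A :: "'a set"
  assume "finite A" "A \<noteq> {}"
  have "beta'' U \<le> real (card (A + A + U)) / real (card A)"
    using \<open>finite A\<close> \<open>A \<noteq> {}\<close> by (rule beta''_le)
  also have "\<dots> \<le> real (card (A + A + (U + U))) / real (card A)"
    using card_le_card_sumset[of U "A + A + U"] \<open>finite A\<close> assms
    by (intro divide_right_mono) (simp_all add: finite_set_plus add.assoc)
  finally show "beta'' U \<le> real (card (A + A + (U + U))) / real (card A)" .
qed

lemma alpha''_le_alpha_square: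
  fixes U :: "'a::ab_group_add set"
  assumes "finite U" "U \<noteq> {}"
  shows "alpha'' U \<le> (alpha U)\<^sup>2"
proof (rule le_alpha_power[OF assms alpha''_nonneg[OF assms]])
  fix A B :: "'a set"
  assume AB: "finite A" "finite B" "A \<noteq> {}" "B \<noteq> {}" "U \<subseteq> A" "U \<subseteq> B"
  obtain X where X: "X \<subseteq> B" "X \<noteq> {}"
    "\<And>n. real (card (X + nfold_sumset n A)) * real (card B) ^ n \<le> real (card (B + A)) ^ n * real (card X)"
    using plunnecke_subset[of B A] AB by blast
  have "finite X" using X(1) AB(2) finite_subset by blast
  have "card X \<le> card B" using AB(2) X(1) by (rule card_mono)
  have "card (A + A) \<le> card (X + (A + A))"
    using card_le_card_sumset[of X "A + A"] \<open>finite X\<close> X(2) AB(1) by (simp add: finite_set_plus add.commute)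
  have "alpha'' U \<le> real (card (A + A)) / real (card A)"
    using AB(1,3,5) by (rule alpha''_le)
  also have "\<dots> \<le> (real (card (A + B)) / sqrt (real (card A) * real (card B)))\<^sup>2"
  proof (rule divide_le_square_ratio)
    show "real (card (X + (A + A))) * (real (card B))\<^sup>2 \<le> (real (card (A + B)))\<^sup>2 * real (card X)"
      using X(3)[of 2] by (simp add: nfold_sumset_2 add.commute)
  qed (use AB \<open>card (A + A) \<le> _\<close> \<open>card X \<le> card B\<close> in \<open>auto simp: card_gt_0_iff\<close>)
  finally show "alpha'' U \<le> (real (card (A + B)) / sqrt (real (card A) * real (card B)))\<^sup>2" .
qed simp

lemma beta_le_square_sumset_ratio:
  fixes U A B :: "'a::ab_group_add set"
  assumes "finite A" "finite B" "A \<noteq> {}" "B \<noteq> {}" "U \<subseteq> A" "card A \<le> card B"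
  shows "beta U \<le> (real (card (A + B)) / sqrt (real (card A) * real (card B)))\<^sup>2"
proof -
  obtain X where X: "X \<subseteq> B" "X \<noteq> {}"
    "\<And>n. real (card (X + nfold_sumset n A)) * real (card B) ^ n \<le> real (card (B + A)) ^ n * real (card X)"
    using plunnecke_subset[of B A] assms by blast
  have "finite X" "card X > 0" using X(1,2) assms(2) finite_subset card_gt_0_iff by blast+
  have "card X \<le> card B" using assms(2) X(1) by (rule card_mono)
  have "A + X + U = X + (A + U)" by (simp add: ac_simps)
  also have "\<dots> \<subseteq> X + (A + A)" using assms(5) by (intro set_plus_mono2 order_refl)
  finally have "card (A + X + U) \<le> card (X + (A + A))"
    using \<open>finite X\<close> assms(1) by (intro card_mono finite_set_plus)
  have "beta U \<le> real (card (A + X + U)) / sqrt (real (card A) * real (card X))"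
    using assms(1) \<open>finite X\<close> assms(3) X(2) by (rule beta_le)
  also have "\<dots> \<le> real (card (X + (A + A))) / sqrt (real (card A) * real (card X))"
    using \<open>card (A + X + U) \<le> _\<close> by (intro divide_right_mono) auto
  also have "\<dots> \<le> (real (card (A + B)) / sqrt (real (card A) * real (card B)))\<^sup>2"
  proof (rule divide_sqrt_le_square_ratio)
    show "real (card (X + (A + A))) * (real (card B))\<^sup>2 \<le> (real (card (A + B)))\<^sup>2 * real (card X)"
      using X(3)[of 2] by (simp add: nfold_sumset_2 add.commute)
  qed (use assms \<open>card X > 0\<close> \<open>card X \<le> card B\<close> in \<open>auto simp: card_gt_0_iff\<close>)
  finally show ?thesis .
qed

lemma beta_le_alpha_square:
  fixes U :: "'a::ab_group_add set"
  assumes "finite U" "U \<noteq> {}"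
  shows "beta U \<le> (alpha U)\<^sup>2"
proof (rule le_alpha_power[OF assms beta_nonneg])
  fix A B :: "'a set"
  assume AB: "finite A" "finite B" "A \<noteq> {}" "B \<noteq> {}" "U \<subseteq> A" "U \<subseteq> B"
  show "beta U \<le> (real (card (A + B)) / sqrt (real (card A) * real (card B)))\<^sup>2"
  proof (cases "card A \<le> card B")
    case True
    then show ?thesis using AB by (intro beta_le_square_sumset_ratio)
  next
    case False
    then have "beta U \<le> (real (card (B + A)) / sqrt (real (card B) * real (card A)))\<^sup>2"
      using AB by (intro beta_le_square_sumset_ratio) auto
    then show ?thesis by (simp add: add.commute mult.commute)
  qed
qed simp

lemma beta''_le_cube_sumset_ratio:
  fixes U A B :: "'a::ab_group_add set"
  assumes "finite A" "finite B" "A \<noteq> {}" "B \<noteq> {}" "U \<subseteq> A" "card A \<le> card B"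
  shows "beta'' U \<le> (real (card (A + B)) / sqrt (real (card A) * real (card B))) ^ 3"
proof -
  obtain X where X: "X \<subseteq> B" "X \<noteq> {}"
    "\<And>n. real (card (X + nfold_sumset n A)) * real (card B) ^ n \<le> real (card (B + A)) ^ n * real (card X)"
    using plunnecke_subset[of B A] assms by blast
  have "finite X" using X(1) assms(2) finite_subset by blast
  have "card X \<le> card B" using assms(2) X(1) by (rule card_mono)
  have "card (A + A + U) \<le> card (A + (A + A))"
    using assms(1,5) by (simp only: add.assoc) (intro card_sumset_mono set_plus_mono2 order_refl finite_set_plus)
  also have "\<dots> \<le> card (X + (A + (A + A)))"
    using card_le_card_sumset[of X "A + (A + A)"] \<open>finite X\<close> X(2) assms(1)
    by (simp add: finite_set_plus add.commute)
  finally have card_le: "card (A + A + U) \<le> card (X + (A + (A + A)))" .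
  have "beta'' U \<le> real (card (A + A + U)) / real (card A)"
    using assms(1,3) by (rule beta''_le)
  also have "\<dots> \<le> real (card (X + (A + (A + A)))) / real (card A)"
    using card_le by (intro divide_right_mono) auto
  also have "\<dots> \<le> (real (card (A + B)) / sqrt (real (card A) * real (card B))) ^ 3"
  proof (rule divide_le_cube_ratio)
    show "real (card (X + (A + (A + A)))) * real (card B) ^ 3 \<le> real (card (A + B)) ^ 3 * real (card X)"
      using X(3)[of 3] by (simp add: nfold_sumset_3 add.commute)
  qed (use assms \<open>card X \<le> card B\<close> in \<open>auto simp: card_gt_0_iff\<close>)
  finally show ?thesis .
qed

lemma beta''_le_alpha_cube:
  fixes U :: "'a::ab_group_add set"
  assumes "finite U" "U \<noteq> {}"
  shows "beta'' U \<le> (alpha U) ^ 3"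
proof (rule le_alpha_power[OF assms beta''_nonneg])
  fix A B :: "'a set"
  assume AB: "finite A" "finite B" "A \<noteq> {}" "B \<noteq> {}" "U \<subseteq> A" "U \<subseteq> B"
  show "beta'' U \<le> (real (card (A + B)) / sqrt (real (card A) * real (card B))) ^ 3"
  proof (cases "card A \<le> card B")
    case True
    then show ?thesis using AB by (intro beta''_le_cube_sumset_ratio)
  next
    case False
    then have "beta'' U \<le> (real (card (B + A)) / sqrt (real (card B) * real (card A))) ^ 3"
      using AB by (intro beta''_le_cube_sumset_ratio) auto
    then show ?thesis by (simp add: add.commute mult.commute)
  qed
qed simp

lemma beta''_double_le_beta_square:
  fixes U :: "'a::ab_group_add set"
  assumes "finite U" "U \<noteq> {}"
  shows "beta'' (U + U) \<le> (beta U)\<^sup>2"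
proof (rule le_beta_power[OF beta''_nonneg])
  fix A B :: "'a set"
  assume AB: "finite A" "finite B" "A \<noteq> {}" "B \<noteq> {}"
  obtain Z where Z: "Z \<subseteq> A" "Z \<noteq> {}"
    "\<And>n. real (card (Z + nfold_sumset n (B + U))) * real (card A) ^ n
      \<le> real (card (A + (B + U))) ^ n * real (card Z)"
    using plunnecke_subset[of A "B + U"] AB assms(1) by (auto simp: finite_set_plus)
  have "finite Z" using Z(1) AB(1) finite_subset by blast
  have "card Z \<le> card A" using AB(1) Z(1) by (rule card_mono)
  have "card (B + B + (U + U)) \<le> card (Z + ((B + U) + (B + U)))"
    using card_le_card_sumset[of Z "B + B + (U + U)"] \<open>finite Z\<close> Z(2) AB(2) assms(1)
    by (simp add: finite_set_plus ac_simps)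
  have "beta'' (U + U) \<le> real (card (B + B + (U + U))) / real (card B)"
    using AB(2,4) by (rule beta''_le)
  also have "\<dots> \<le> (real (card (A + (B + U))) / sqrt (real (card B) * real (card A)))\<^sup>2"
  proof (rule divide_le_square_ratio)
    show "real (card (Z + ((B + U) + (B + U)))) * (real (card A))\<^sup>2
      \<le> (real (card (A + (B + U))))\<^sup>2 * real (card Z)"
      using Z(3)[of 2] by (simp add: nfold_sumset_2)
  qed (use AB \<open>card Z \<le> card A\<close> \<open>card (B + B + (U + U)) \<le> _\<close> in \<open>auto simp: card_gt_0_iff\<close>)
  finally show "beta'' (U + U) \<le> (real (card (A + B + U)) / sqrt (real (card A) * real (card B)))\<^sup>2"
    by (simp add: add.assoc mult.commute)
qed simp

theorem mainTheorem16:
  fixes U :: "'a::ab_group_add set"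
  assumes "finite U" and "U \<noteq> {}"
  shows "alpha U \<le> beta U \<and>
    alpha' U \<le> 4 * beta' U \<and>
    alpha'' U \<le> 3 * beta'' U \<and>
    beta U \<le> (alpha U)\<^sup>2 \<and>
    beta'' U \<le> (alpha U)^3 \<and>
    alpha'' U \<le> (alpha U)\<^sup>2 \<and>
    beta'' U \<le> beta'' (U + U) \<and>
    beta'' (U + U) \<le> (beta U)\<^sup>2"
proof -
  have "alpha' U \<le> 4 * beta' U"
    using alpha'_le_beta'[OF assms] beta'_nonneg[of U] by linarith
  moreover have "alpha'' U \<le> 3 * beta'' U"
    using alpha''_le_beta''[OF assms] beta''_nonneg[of U] by linarith
  ultimately show ?thesis
    using alpha_le_beta[OF assms] beta_le_alpha_square[OF assms] beta''_le_alpha_cube[OF assms]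
      alpha''_le_alpha_square[OF assms] beta''_le_beta''_double[OF assms]
      beta''_double_le_beta_square[OF assms]
    by blast
qed

end
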